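(* Let $\mathfrak{A}$ be a $(\circ,\wedge,\mathsf{A})$-algebra that is representable by partial functions. If $\mathfrak{A}$ is atomic, then it is atomistic: every $a\in\mathfrak{A}$ is the join (in $\mathfrak{A}$) of the set of atoms $x$ with $x\le a$.
   Context: A $(\circ,\wedge,\mathsf{A})$-algebra is a set with two binary operations $\circ,\wedge$ and one unary operation $\mathsf{A}$. An algebra of partial functions of this signature is a set of partial functions, with base $X$ the union of all their domains and ranges, closed under: composition $f\circ g=\{(x,z)\mid \exists y\,(x,y)\in f,(y,z)\in g\}$; intersection; antidomain $\mathsf{A}(f)=\{(x,x)\mid x\in X, x\notin\mathrm{dom}(f)\}$. A representation by partial functions is an isomorphism onto such an algebra. The order is $a\le b\iff a\wedge b=a$, with least element $0=\mathsf{A}(a)\circ a$. An atom is a minimal nonzero element; $\mathfrak{A}$ is atomic if every nonzero element is above an atom. *)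

theory Defs
  imports Main
begin

text \<open>Partial functions on a base type 'b are modelled as functional relations.
  Composition f \<circ> g of the paper (first f, then g) is relational composition f O g.\<close>

definition pfun :: "('b \<times> 'b) set \<Rightarrow> bool" where
  "pfun f \<longleftrightarrow> (\<forall>x y z. (x, y) \<in> f \<longrightarrow> (x, z) \<in> f \<longrightarrow> y = z)"

definition pf_base :: "('b \<times> 'b) set set \<Rightarrow> 'b set" where
  "pf_base F = (\<Union>f\<in>F. Domain f \<union> Range f)"

definition is_algebra :: "'a set \<Rightarrow> ('a \<Rightarrow> 'a \<Rightarrow> 'a) \<Rightarrow> ('a \<Rightarrow> 'a \<Rightarrow> 'a) \<Rightarrow> ('a \<Rightarrow> 'a) \<Rightarrow> bool" where
  "is_algebra S cmp meet ant \<longleftrightarrow>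
     (\<forall>a\<in>S. \<forall>b\<in>S. cmp a b \<in> S \<and> meet a b \<in> S) \<and> (\<forall>a\<in>S. ant a \<in> S)"

definition is_pf_representation ::
  "'a set \<Rightarrow> ('a \<Rightarrow> 'a \<Rightarrow> 'a) \<Rightarrow> ('a \<Rightarrow> 'a \<Rightarrow> 'a) \<Rightarrow> ('a \<Rightarrow> 'a) \<Rightarrow> ('a \<Rightarrow> ('b \<times> 'b) set) \<Rightarrow> bool" where
  "is_pf_representation S cmp meet ant h \<longleftrightarrow>
     inj_on h S \<and> (\<forall>a\<in>S. pfun (h a)) \<and>
     (\<forall>a\<in>S. \<forall>b\<in>S. h (cmp a b) = h a O h b) \<and>
     (\<forall>a\<in>S. \<forall>b\<in>S. h (meet a b) = h a \<inter> h b) \<and>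
     (\<forall>a\<in>S. h (ant a) = {(x, x) | x. x \<in> pf_base (h ` S) \<and> x \<notin> Domain (h a)})"

definition alg_le :: "('a \<Rightarrow> 'a \<Rightarrow> 'a) \<Rightarrow> 'a \<Rightarrow> 'a \<Rightarrow> bool" where
  "alg_le meet a b \<longleftrightarrow> meet a b = a"

definition is_zero :: "('a \<Rightarrow> 'a \<Rightarrow> 'a) \<Rightarrow> ('a \<Rightarrow> 'a) \<Rightarrow> 'a \<Rightarrow> bool" where
  "is_zero cmp ant x \<longleftrightarrow> x = cmp (ant x) x"

definition is_atom :: "'a set \<Rightarrow> ('a \<Rightarrow> 'a \<Rightarrow> 'a) \<Rightarrow> ('a \<Rightarrow> 'a \<Rightarrow> 'a) \<Rightarrow> ('a \<Rightarrow> 'a) \<Rightarrow> 'a \<Rightarrow> bool" where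
  "is_atom S cmp meet ant x \<longleftrightarrow> x \<in> S \<and> \<not> is_zero cmp ant x \<and>
     (\<forall>y\<in>S. alg_le meet y x \<and> \<not> is_zero cmp ant y \<longrightarrow> y = x)"

definition is_atomic :: "'a set \<Rightarrow> ('a \<Rightarrow> 'a \<Rightarrow> 'a) \<Rightarrow> ('a \<Rightarrow> 'a \<Rightarrow> 'a) \<Rightarrow> ('a \<Rightarrow> 'a) \<Rightarrow> bool" where
  "is_atomic S cmp meet ant \<longleftrightarrow>
     (\<forall>a\<in>S. \<not> is_zero cmp ant a \<longrightarrow> (\<exists>x. is_atom S cmp meet ant x \<and> alg_le meet x a))"

definition is_join :: "'a set \<Rightarrow> ('a \<Rightarrow> 'a \<Rightarrow> 'a) \<Rightarrow> 'a set \<Rightarrow> 'a \<Rightarrow> bool" where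
  "is_join S meet X a \<longleftrightarrow> a \<in> S \<and> (\<forall>x\<in>X. alg_le meet x a) \<and>
     (\<forall>b\<in>S. (\<forall>x\<in>X. alg_le meet x b) \<longrightarrow> alg_le meet a b)"

definition is_atomistic :: "'a set \<Rightarrow> ('a \<Rightarrow> 'a \<Rightarrow> 'a) \<Rightarrow> ('a \<Rightarrow> 'a \<Rightarrow> 'a) \<Rightarrow> ('a \<Rightarrow> 'a) \<Rightarrow> bool" where
  "is_atomistic S cmp meet ant \<longleftrightarrow>
     (\<forall>a\<in>S. is_join S meet {x. is_atom S cmp meet ant x \<and> alg_le meet x a} a)"

end

theory Submission
  imports Defs
begin

text \<open>
  Through a representation h by partial functions, the order of the
  algebra becomes inclusion of relations and the zero elements are exactly those
  represented by the empty relation.  The signature can moreover express relative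
  difference: the term A(a \<and> b) \<circ> a restricts a to the points where a and b do
  not agree, and since h a is single-valued this is precisely h a - h b.

  Given a, the atoms below a are trivially bounded by a.  For leastness, let b be
  any upper bound of these atoms and suppose a is not below b.  Then the difference
  of a and b is nonzero, so atomicity yields an atom t below it; t is below a,
  hence below b, yet disjoint from b, so t is zero, a contradiction.
\<close>

lemma rep_le_iff:
  assumes A: "is_algebra S cmp meet ant" and R: "is_pf_representation S cmp meet ant h"
    and a: "a \<in> S" and b: "b \<in> S"
  shows "alg_le meet a b \<longleftrightarrow> h a \<subseteq> h b"
proof -
  have "meet a b \<in> S" using A a b unfolding is_algebra_def by blast
  moreover have "inj_on h S" and "h (meet a b) = h a \<inter> h b"
    using R a b unfolding is_pf_representation_def by auto
  ultimately have "meet a b = a \<longleftrightarrow> h a \<inter> h b = h a"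
    using a by (metis inj_on_eq_iff)
  then show ?thesis unfolding alg_le_def by blast
qed

text \<open>Under a representation, the zero elements are those represented by the
  empty relation (A(a) is the identity off the domain of a, so A(a) \<circ> a is empty).\<close>
lemma rep_zero_iff:
  assumes A: "is_algebra S cmp meet ant" and R: "is_pf_representation S cmp meet ant h"
    and a: "a \<in> S"
  shows "is_zero cmp ant a \<longleftrightarrow> h a = {}"
proof -
  have an: "ant a \<in> S" using A a unfolding is_algebra_def by blast
  have c: "cmp (ant a) a \<in> S" using A a an unfolding is_algebra_def by blast
  have inj: "inj_on h S" and hc: "h (cmp (ant a) a) = h (ant a) O h a"
    and ha: "h (ant a) = {(x, x) | x. x \<in> pf_base (h ` S) \<and> x \<notin> Domain (h a)}"
    using R a an unfolding is_pf_representation_def by auto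
  have empty: "h (cmp (ant a) a) = {}" unfolding hc ha by blast
  have "a = cmp (ant a) a \<longleftrightarrow> h a = h (cmp (ant a) a)"
    using inj c a by (metis inj_on_eq_iff)
  then show ?thesis unfolding is_zero_def empty by simp
qed

text \<open>Relative difference, expressed in the signature: a restricted to the points
  outside the domain of a \<and> b.\<close>
definition alg_minus :: "('a \<Rightarrow> 'a \<Rightarrow> 'a) \<Rightarrow> ('a \<Rightarrow> 'a \<Rightarrow> 'a) \<Rightarrow> ('a \<Rightarrow> 'a) \<Rightarrow> 'a \<Rightarrow> 'a \<Rightarrow> 'a" where
  "alg_minus cmp meet ant a b = cmp (ant (meet a b)) a"

lemma alg_minus_closed:
  assumes "is_algebra S cmp meet ant" and "a \<in> S" and "b \<in> S"
  shows "alg_minus cmp meet ant a b \<in> S"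
  using assms unfolding is_algebra_def alg_minus_def by blast

text \<open>The difference term is represented by set difference; this is where the
  single-valuedness of h a is used: a point where a and b are both defined but
  differ cannot occur.\<close>
lemma rep_alg_minus:
  assumes A: "is_algebra S cmp meet ant" and R: "is_pf_representation S cmp meet ant h"
    and a: "a \<in> S" and b: "b \<in> S"
  shows "h (alg_minus cmp meet ant a b) = h a - h b"
proof -
  have m: "meet a b \<in> S" using A a b unfolding is_algebra_def by blast
  then have d: "ant (meet a b) \<in> S" using A unfolding is_algebra_def by blast
  have hm: "h (meet a b) = h a \<inter> h b"
    and hd: "h (ant (meet a b)) =
               {(x, x) | x. x \<in> pf_base (h ` S) \<and> x \<notin> Domain (h (meet a b))}"
    and hc: "h (cmp (ant (meet a b)) a) = h (ant (meet a b)) O h a"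
    and pf: "pfun (h a)"
    using R a b m d unfolding is_pf_representation_def by auto
  have base: "Domain (h a) \<subseteq> pf_base (h ` S)" using a unfolding pf_base_def by blast
  have restrict: "h (alg_minus cmp meet ant a b) =
                    {(x, y). (x, y) \<in> h a \<and> x \<notin> Domain (h a \<inter> h b)}"
    unfolding alg_minus_def hc hd hm using base by blast
  have "x \<notin> Domain (h a \<inter> h b)" if "(x, y) \<in> h a" "(x, y) \<notin> h b" for x y
    using that pf unfolding pfun_def by blast
  then show ?thesis unfolding restrict by blast
qed

text \<open>In an atomic representable algebra, if a is not below b then some atom
  below a is not below b: take an atom below the (nonzero) difference of a and b.\<close>
lemma atom_separates:
  assumes A: "is_algebra S cmp meet ant" and R: "is_pf_representation S cmp meet ant h"
    and at: "is_atomic S cmp meet ant"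
    and a: "a \<in> S" and b: "b \<in> S" and not_le: "\<not> alg_le meet a b"
  obtains t where "is_atom S cmp meet ant t" "alg_le meet t a" "\<not> alg_le meet t b"
proof -
  define c where "c = alg_minus cmp meet ant a b"
  have cS: "c \<in> S" unfolding c_def using alg_minus_closed[OF A a b] .
  have hc: "h c = h a - h b" unfolding c_def using rep_alg_minus[OF A R a b] .
  have "\<not> h a \<subseteq> h b" using not_le rep_le_iff[OF A R a b] by simp
  then have "\<not> is_zero cmp ant c" using rep_zero_iff[OF A R cS] hc by auto
  then obtain t where t: "is_atom S cmp meet ant t" and tc: "alg_le meet t c"
    using at cS unfolding is_atomic_def by blast
  have tS: "t \<in> S" and t_nonzero: "h t \<noteq> {}"
    using t rep_zero_iff[OF A R] unfolding is_atom_def by auto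
  have "h t \<subseteq> h a - h b" using tc rep_le_iff[OF A R tS cS] hc by simp
  then have "alg_le meet t a" and "\<not> alg_le meet t b"
    using t_nonzero rep_le_iff[OF A R tS a] rep_le_iff[OF A R tS b] by auto
  with t show ?thesis using that by blast
qed

theorem mainTheorem14:
  fixes S :: "'a set" and cmp meet :: "'a \<Rightarrow> 'a \<Rightarrow> 'a" and ant :: "'a \<Rightarrow> 'a"
    and h :: "'a \<Rightarrow> ('b \<times> 'b) set"
  assumes "is_algebra S cmp meet ant"
    and "is_pf_representation S cmp meet ant h"
    and "is_atomic S cmp meet ant"
  shows "is_atomistic S cmp meet ant"
  unfolding is_atomistic_def
proof
  fix a assume a: "a \<in> S"
  let ?atoms = "{x. is_atom S cmp meet ant x \<and> alg_le meet x a}"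
  have least: "alg_le meet a b" if b: "b \<in> S" and ub: "\<forall>x\<in>?atoms. alg_le meet x b" for b
  proof (rule ccontr)
    assume "\<not> alg_le meet a b"
    with atom_separates[OF assms a b] ub show False by blast
  qed
  show "is_join S meet ?atoms a"
    unfolding is_join_def using a least by blast
qed

end
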